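(* Let $b\ge0$ be a constant and assume (A1) and (A2). Let $\tilde M=\phi_{\max}\psi_{\max}\big[2+\big(b\max\{\sqrt{d_1}\theta_{\max},\sqrt{d_2}\gamma_{\max}\}/\sqrt2+\sqrt{d_1d_2}\gamma_{\max}\theta_{\max}\big)\phi_{\max}\psi_{\max}\big]$. For any realization of the data with $y_i\in\{0,1\}$: when $\|\theta-\theta_*\|_2\le b/\sqrt2$, for all $\gamma\in\mathbb{R}^{d_2}$ and $\gamma'\in\Gamma$, $$\|\nabla_\theta L_n(\theta,\gamma)-\nabla_\theta L_n(\theta,\gamma')\|_2\le\tilde M\|\gamma-\gamma'\|_2;$$ when $\|\gamma-\gamma_*\|_2\le b/\sqrt2$, for all $\theta\in\mathbb{R}^{d_1}$ and $\theta'\in\Theta$, $$\|\nabla_\gamma L_n(\theta,\gamma)-\nabla_\gamma L_n(\theta',\gamma)\|_2\le\tilde M\|\theta-\theta'\|_2.$$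
   Context: Data $(x_i,s_i,a_i^{(0)},a_i^{(1)},y_i)$, $i=1,\dots,n$, with $y_i\in\{0,1\}$. Known feature maps $\phi$ ($\mathbb{R}^{d_1}$-valued), $\psi_0$ (real), $\psi$ ($\mathbb{R}^{d_2}$-valued). $\sigma_\gamma(x)=\psi_0(x)+\gamma^\top\psi(x)$, $z_i=\phi(s_i,a_i^{(1)})-\phi(s_i,a_i^{(0)})$, $\mu(v)=1/(1+e^{-v})$, $L_n(\theta,\gamma)=-\frac1n\sum_i\{y_i\log\mu(\sigma_\gamma(x_i)\theta^\top z_i)+(1-y_i)\log[1-\mu(\sigma_\gamma(x_i)\theta^\top z_i)]\}$. (A1): $\|\phi(s,a)\|_2\le\phi_{\max}$; the true parameter $\theta_*\in\Theta=\{\theta:\|\theta\|_\infty\le\theta_{\max}\}$. (A2): $\psi_0\not\equiv0$; $\sup_x\|(\psi_0(x),\psi(x)^\top)\|_2\le\psi_{\max}$; the true $\gamma_*\in\Gamma=\{\gamma:\|(1,\gamma^\top)\|_\infty\le\gamma_{\max}\}$. *)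

theory Defs
  imports "HOL-Analysis.Analysis"
begin

definition grad :: "('a::real_inner \<Rightarrow> real) \<Rightarrow> 'a \<Rightarrow> 'a" where
  "grad f x = (THE D. GDERIV f x :> D)"

definition mu :: "real \<Rightarrow> real" where
  "mu v = 1 / (1 + exp (- v))"

definition supnorm :: "real ^ 'd \<Rightarrow> real" where
  "supnorm v = Max (range (\<lambda>i. \<bar>v $ i\<bar>))"

definition Theta :: "real \<Rightarrow> (real ^ 'd1) set" where
  "Theta tmax = {\<theta>. supnorm \<theta> \<le> tmax}"

text \<open>Gamma = {gamma. ||(1, gamma)||_inf <= gmax}\<close>
definition Gamma :: "real \<Rightarrow> (real ^ 'd2) set" where
  "Gamma gmax = {\<gamma>. max 1 (supnorm \<gamma>) \<le> gmax}"

definition sigma ::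
  "('x \<Rightarrow> real) \<Rightarrow> ('x \<Rightarrow> real ^ 'd2) \<Rightarrow> real ^ 'd2 \<Rightarrow> 'x \<Rightarrow> real" where
  "sigma psi0 psi \<gamma> x = psi0 x + \<gamma> \<bullet> psi x"

definition Ln ::
  "nat \<Rightarrow> (nat \<Rightarrow> 'x) \<Rightarrow> (nat \<Rightarrow> 's) \<Rightarrow> (nat \<Rightarrow> 'a) \<Rightarrow> (nat \<Rightarrow> 'a) \<Rightarrow> (nat \<Rightarrow> real)
   \<Rightarrow> ('s \<Rightarrow> 'a \<Rightarrow> real ^ 'd1) \<Rightarrow> ('x \<Rightarrow> real) \<Rightarrow> ('x \<Rightarrow> real ^ 'd2)
   \<Rightarrow> real ^ 'd1 \<Rightarrow> real ^ 'd2 \<Rightarrow> real" where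
  "Ln n x s a0 a1 y phi psi0 psi \<theta> \<gamma> =
     - (1 / real n) * (\<Sum>i<n.
        let v = sigma psi0 psi \<gamma> (x i) * (\<theta> \<bullet> (phi (s i) (a1 i) - phi (s i) (a0 i)))
        in y i * ln (mu v) + (1 - y i) * ln (1 - mu v))"

end

theory Submission
  imports Defs
begin

(* Each gradient difference is an average of per-sample terms
     ((y - mu (p q)) p - (y - mu (p' q)) p') v,
   where one of p, p' comes from a parameter that is completely arbitrary (gamma in R^d2, resp.
   theta in R^d1), so the Lipschitz constant in p may depend only on the anchor p'.  Multiplying
   by q turns the scalar factor into y (u - a) - (swish u - swish a) with u = p q, a = p' q and
   swish t = t mu(t), and the whole estimate reduces to the fact that every secant slope of swish
   issued from a lies in [-|a|/5, 1 + |a|/5].  The remaining factors are bounded by Cauchy-Schwarz,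
   ||v||_2 <= sqrt d ||v||_inf and |c0| r <= c0^2 + r^2/4, which produces the constant M~. *)

section \<open>The logistic function and the gradients of L_n\<close>

lemma mu_pos: "0 < mu v"
  by (simp add: mu_def add_pos_pos)

lemma mu_less_one: "mu v < 1"
  by (simp add: mu_def add_pos_pos)

lemma mu_minus: "mu (- v) = 1 - mu v"
proof -
  have "0 < 1 + exp v"
    by (simp add: add_pos_pos)
  then show ?thesis
    by (simp add: mu_def exp_minus field_simps)
qed

lemma mu_zero: "mu 0 = 1 / 2"
  by (simp add: mu_def)

lemma mu_mono: "u \<le> v \<Longrightarrow> mu u \<le> mu v"
  by (simp add: mu_def frac_le add_pos_pos)

lemma mu_le_exp: "mu v \<le> exp v"
  by (simp add: mu_def exp_minus field_simps add_pos_pos)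

lemma DERIV_mu: "DERIV mu v :> mu v * mu (- v)"
proof -
  have "DERIV (\<lambda>v. 1 / (1 + exp (- v))) v :> exp (- v) / (1 + exp (- v))\<^sup>2"
    using add_pos_pos[OF zero_less_one exp_gt_zero, of "- v"]
    by (auto intro!: derivative_eq_intros simp: power2_eq_square)
  moreover have "exp (- v) / (1 + exp (- v))\<^sup>2 = mu v * mu (- v)"
    by (simp add: mu_def exp_minus field_simps power2_eq_square add_pos_pos)
  ultimately show ?thesis
    by (simp add: mu_def[abs_def])
qed

definition logistic_loglik :: "real \<Rightarrow> real \<Rightarrow> real" where
  "logistic_loglik y v = y * ln (mu v) + (1 - y) * ln (1 - mu v)"

lemma DERIV_logistic_loglik: "DERIV (logistic_loglik y) v :> y - mu v"
proof -
  have "DERIV (\<lambda>v. y * ln (mu v) + (1 - y) * ln (mu (- v))) v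
          :> y * (mu v * mu (- v) / mu v) + (1 - y) * (mu (- v) * mu v * (- 1) / mu (- v))"
    using mu_pos[of v] mu_pos[of "- v"]
    by (auto intro!: derivative_eq_intros DERIV_mu[THEN DERIV_chain2])
  moreover have "y * (mu v * mu (- v) / mu v) + (1 - y) * (mu (- v) * mu v * (- 1) / mu (- v)) = y - mu v"
    using mu_pos[of v] mu_pos[of "- v"] by (simp add: mu_minus, simp add: algebra_simps)
  ultimately show ?thesis
    by (simp add: logistic_loglik_def[abs_def] mu_minus)
qed

lemma grad_eqI: "GDERIV f x :> D \<Longrightarrow> grad f x = D"
  unfolding grad_def
proof (rule the_equality)
  fix D' assume D: "GDERIV f x :> D" and D': "GDERIV f x :> D'"
  have "(\<lambda>h. h \<bullet> D') = (\<lambda>h. h \<bullet> D)"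
    using has_derivative_unique D D' unfolding gderiv_def by blast
  then have "(D' - D) \<bullet> (D' - D) = 0"
    by (metis inner_diff_right right_minus_eq)
  then show "D' = D"
    by simp
qed

lemma grad_avg_logistic_loglik:
  fixes A :: "nat \<Rightarrow> 'v::real_inner"
  shows "grad (\<lambda>t. - (1 / real n) * (\<Sum>i<n. logistic_loglik (y i) (t \<bullet> A i + B i))) x
           = - (1 / real n) *\<^sub>R (\<Sum>i<n. (y i - mu (x \<bullet> A i + B i)) *\<^sub>R A i)"
proof (rule grad_eqI)
  have affine: "GDERIV (\<lambda>t. t \<bullet> A i + B i) x :> A i" for i
    unfolding gderiv_def by (auto intro!: derivative_eq_intros)
  have "((\<lambda>t. logistic_loglik (y i) (t \<bullet> A i + B i))
          has_derivative (\<lambda>h. h \<bullet> ((y i - mu (x \<bullet> A i + B i)) *\<^sub>R A i))) (at x)" for i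
    using GDERIV_DERIV_compose[OF affine DERIV_logistic_loglik] unfolding gderiv_def .
  then have "((\<lambda>t. - (1 / real n) * (\<Sum>i<n. logistic_loglik (y i) (t \<bullet> A i + B i)))
          has_derivative (\<lambda>h. - (1 / real n) * (\<Sum>i<n. h \<bullet> ((y i - mu (x \<bullet> A i + B i)) *\<^sub>R A i)))) (at x)"
    by (intro has_derivative_mult_right has_derivative_sum)
  then show "GDERIV (\<lambda>t. - (1 / real n) * (\<Sum>i<n. logistic_loglik (y i) (t \<bullet> A i + B i))) x
           :> - (1 / real n) *\<^sub>R (\<Sum>i<n. (y i - mu (x \<bullet> A i + B i)) *\<^sub>R A i)"
    unfolding gderiv_def by (simp add: inner_sum_right)
qed

lemma Ln_eq_avg_logistic_loglik:
  "Ln n x s a0 a1 y phi psi0 psi \<theta> \<gamma> = - (1 / real n) *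
     (\<Sum>i<n. logistic_loglik (y i) (sigma psi0 psi \<gamma> (x i) * (\<theta> \<bullet> (phi (s i) (a1 i) - phi (s i) (a0 i)))))"
  by (simp add: Ln_def logistic_loglik_def Let_def)

lemma grad_Ln_theta:
  "grad (\<lambda>t. Ln n x s a0 a1 y phi psi0 psi t \<gamma>) \<theta> = - (1 / real n) *\<^sub>R
     (\<Sum>i<n. ((y i - mu (sigma psi0 psi \<gamma> (x i) * (\<theta> \<bullet> (phi (s i) (a1 i) - phi (s i) (a0 i)))))
                * sigma psi0 psi \<gamma> (x i)) *\<^sub>R (phi (s i) (a1 i) - phi (s i) (a0 i)))"
  using grad_avg_logistic_loglik[of n y
      "\<lambda>i. sigma psi0 psi \<gamma> (x i) *\<^sub>R (phi (s i) (a1 i) - phi (s i) (a0 i))" "\<lambda>i. 0" \<theta>]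
  by (simp add: Ln_eq_avg_logistic_loglik)

lemma grad_Ln_gamma:
  "grad (\<lambda>g. Ln n x s a0 a1 y phi psi0 psi \<theta> g) \<gamma> = - (1 / real n) *\<^sub>R
     (\<Sum>i<n. ((y i - mu (sigma psi0 psi \<gamma> (x i) * (\<theta> \<bullet> (phi (s i) (a1 i) - phi (s i) (a0 i)))))
                * (\<theta> \<bullet> (phi (s i) (a1 i) - phi (s i) (a0 i)))) *\<^sub>R psi (x i))"
  using grad_avg_logistic_loglik[of n y
      "\<lambda>i. (\<theta> \<bullet> (phi (s i) (a1 i) - phi (s i) (a0 i))) *\<^sub>R psi (x i)"
      "\<lambda>i. psi0 (x i) * (\<theta> \<bullet> (phi (s i) (a1 i) - phi (s i) (a0 i)))" \<gamma>]
  by (simp add: Ln_eq_avg_logistic_loglik sigma_def algebra_simps)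

section \<open>Secant slopes of swish t = t mu(t)\<close>

definition swish :: "real \<Rightarrow> real" where
  "swish t = t * mu t"

lemma swish_minus: "swish (- t) = swish t - t"
  by (simp add: swish_def mu_minus algebra_simps)

lemma swish_nonpos: "t \<le> 0 \<Longrightarrow> swish t \<le> 0"
  by (simp add: swish_def mult_nonpos_nonneg less_imp_le[OF mu_pos])

lemma swish_nonneg: "0 \<le> t \<Longrightarrow> 0 \<le> swish t"
  by (simp add: swish_def less_imp_le[OF mu_pos])

lemma DERIV_swish: "DERIV swish t :> mu t * (1 + t * mu (- t))"
proof -
  have "DERIV (\<lambda>t. t * mu t) t :> 1 * mu t + mu t * mu (- t) * t"
    by (rule DERIV_mult[OF DERIV_ident DERIV_mu])
  then show ?thesis
    by (simp add: swish_def[abs_def] algebra_simps)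
qed

lemma swish_deriv_nonneg: "-1 \<le> t \<Longrightarrow> 0 \<le> mu t * (1 + t * mu (- t))"
proof -
  assume t: "-1 \<le> t"
  have "-1 \<le> t * mu (- t)"
  proof (cases "0 \<le> t")
    case True
    then have "0 \<le> t * mu (- t)"
      using mu_pos[of "- t"] by simp
    then show ?thesis
      by linarith
  next
    case False
    then have "t * 1 \<le> t * mu (- t)"
      using mu_less_one[of "- t"] by (intro mult_left_mono_neg) auto
    then show ?thesis
      using t by simp
  qed
  then show ?thesis
    using mu_pos[of t] by simp
qed

lemma swish_deriv_ge: "-1/5 \<le> mu t * (1 + t * mu (- t))"
proof (cases "-1 \<le> t")
  case True
  then show ?thesis
    using swish_deriv_nonneg[OF True] by linarith
next
  case False
  have "5 * (- t - 1) \<le> exp 2 * exp (- t - 2)"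
  proof (rule mult_mono)
    show "5 \<le> exp (2::real)"
      using exp_lower_Taylor_quadratic[of 2] by simp
    show "- t - 1 \<le> exp (- t - 2)"
      using exp_ge_add_one_self[of "- t - 2"] by simp
  qed (use False in auto)
  then have "5 * (- t - 1) \<le> exp (- t)"
    by (simp flip: exp_add)
  then have "- 1/5 \<le> exp t * (1 + t)"
    by (simp add: exp_minus field_simps)
  also have "\<dots> \<le> mu t * (1 + t)"
    using False mu_le_exp[of t] by (intro mult_right_mono_neg) auto
  also have "\<dots> \<le> mu t * (1 + t * mu (- t))"
    using False mu_pos[of t] mu_less_one[of "- t"]
    by (intro mult_left_mono) (auto simp: mult_le_cancel_left1)
  finally show ?thesis .
qed

lemma swish_mono: "-1 \<le> u \<Longrightarrow> u \<le> v \<Longrightarrow> swish u \<le> swish v"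
  by (rule DERIV_nonneg_imp_nondecreasing[of u v swish])
     (use DERIV_swish swish_deriv_nonneg in fastforce)+

lemma swish_diff_ge: "u \<le> v \<Longrightarrow> - (v - u) / 5 \<le> swish v - swish u"
proof -
  assume "u \<le> v"
  then have "swish u + u / 5 \<le> swish v + v / 5"
  proof (rule DERIV_nonneg_imp_nondecreasing[of u v "\<lambda>t. swish t + t / 5"])
    fix t
    have "DERIV (\<lambda>t. swish t + t / 5) t :> mu t * (1 + t * mu (- t)) + 1 / 5"
      using DERIV_add[OF DERIV_swish DERIV_cdivide[OF DERIV_ident, of 5]] by simp
    then show "\<exists>d. DERIV (\<lambda>t. swish t + t / 5) t :> d \<and> 0 \<le> d"
      using swish_deriv_ge[of t] by force
  qed
  then show ?thesis
    by simp
qed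

lemma ln_ge_two_mul_diff_div_add: "1 \<le> (x::real) \<Longrightarrow> 2 * (x - 1) / (x + 1) \<le> ln x"
proof -
  assume x1: "1 \<le> x"
  have "ln 1 - 2 * (1 - 1) / (1 + 1) \<le> ln x - 2 * (x - 1) / (x + 1)"
  proof (rule DERIV_nonneg_imp_nondecreasing[OF x1])
    fix y :: real assume "1 \<le> y" "y \<le> x"
    then have y: "0 < y" by simp
    have "DERIV (\<lambda>y. ln y - 2 * (y - 1) / (y + 1)) y :> 1 / y - 4 / (y + 1)\<^sup>2"
      using y by (auto intro!: derivative_eq_intros simp: field_simps power2_eq_square)
    moreover have "4 * y \<le> (y + 1)\<^sup>2"
      using zero_le_power2[of "y - 1"] by (simp add: power2_eq_square algebra_simps)
    then have "4 / (y + 1)\<^sup>2 \<le> 1 / y"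
      using y by (simp add: field_simps)
    ultimately show "\<exists>d. DERIV (\<lambda>y. ln y - 2 * (y - 1) / (y + 1)) y :> d \<and> 0 \<le> d"
      by force
  qed
  then show ?thesis
    by simp
qed

lemma log_mean_bound:
  fixes p q t :: real
  assumes "0 < p" "p \<le> q" "q \<le> exp t * p"
  shows "2 * (q - p) \<le> t * (q + p)"
proof -
  define X where "X = q / p"
  have X1: "1 \<le> X" and "X \<le> exp t"
    using assms by (simp_all add: X_def field_simps)
  then have "ln X \<le> ln (exp t)"
    using X1 by (intro ln_mono) auto
  then have "ln X \<le> t"
    by simp
  then have "2 * (X - 1) / (X + 1) \<le> t"
    using ln_ge_two_mul_diff_div_add[OF X1] by linarith
  then have "2 * (X - 1) \<le> t * (X + 1)"
    using X1 by (simp add: pos_divide_le_eq)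
  then have "2 * (X - 1) * p \<le> t * (X + 1) * p"
    using assms(1) by (intro mult_right_mono) auto
  then show ?thesis
    using assms(1) by (simp add: X_def algebra_simps)
qed

lemma mu_neg_le_exp_mult: "a \<le> s \<Longrightarrow> mu (- a) \<le> exp (s - a) * mu (- s)"
proof -
  assume "a \<le> s"
  then have "1 + exp s \<le> exp (s - a) * (1 + exp a)"
    by (simp add: algebra_simps flip: exp_add)
  then show ?thesis
    by (simp add: mu_def field_simps add_pos_pos)
qed

lemma exp_3_le: "exp (3::real) \<le> 27"
proof -
  have "exp (3::real) = exp 1 ^ 3"
    by (simp flip: exp_of_nat_mult)
  also have "\<dots> \<le> 3 ^ 3"
    using exp_le by (intro power_mono) auto
  finally show ?thesis
    by simp
qed

lemma mu_neg_weighted_sum_le: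
  assumes "0 < a" "a \<le> 1" "a \<le> s" "s - a < 5 / 2"
  shows "a * (mu (- a) + mu (- s)) \<le> 2 * mu (- s) + 2 * a / 5"
proof (cases "1 / 2 \<le> a")
  case True
  have "5 / 2 \<le> 1 + exp a"
    using True exp_ge_add_one_self[of a] by linarith
  then have "mu (- a) \<le> 2 / 5"
    by (simp add: mu_def divide_le_eq)
  then have "a * mu (- a) \<le> a * (2 / 5)"
    using assms(1) by (intro mult_left_mono) auto
  moreover have "a * mu (- s) \<le> 2 * mu (- s)"
    using assms(2) mu_pos[of "- s"] by (intro mult_right_mono) auto
  ultimately show ?thesis
    by (simp add: algebra_simps)
next
  case False
  have "exp s \<le> exp 3"
    using False assms(4) by simp
  then have "exp s \<le> 27"
    using exp_3_le by linarith
  then have "1 / 28 \<le> mu (- s)"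
    by (simp add: mu_def field_simps add_pos_pos)
  moreover have "a * mu (- a) \<le> a * (1 / 2)"
    using assms(1) mu_mono[of "- a" 0] by (intro mult_left_mono) (auto simp: mu_zero)
  moreover have "a * mu (- s) \<le> (1 / 2) * mu (- s)"
    using False mu_pos[of "- s"] by (intro mult_right_mono) auto
  moreover have "a * (mu (- a) + mu (- s)) = a * mu (- a) + a * mu (- s)"
    by (rule distrib_left)
  ultimately show ?thesis
    using False by linarith
qed

(* The one case of swish_secant_ge that neither the monotonicity of swish on [-1, oo) nor its
   global slope bound -1/5 settles: anchor -a in (-1, 0), point -s to its left. *)
lemma swish_neg_diff_le:
  assumes a: "0 < a" "a \<le> 1" and s: "a \<le> s"
  shows "swish (- s) - swish (- a) \<le> a / 5 * (s - a)"
proof -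
  define p q t where "p = mu (- s)" and "q = mu (- a)" and "t = s - a"
  have p: "0 < p"
    by (simp add: p_def mu_pos)
  have pq: "p \<le> q"
    using s by (simp add: p_def q_def mu_mono)
  have q: "q \<le> 1 / 2"
    using a mu_mono[of "- a" 0] by (simp add: q_def mu_zero)
  have "a * (q - p) \<le> t * p + a * t / 5"
  proof (cases "5 / 2 \<le> t")
    case True
    have "a * (q - p) \<le> a * (1 / 2)"
      using a p q by (intro mult_left_mono) auto
    moreover have "a * (1 / 2) \<le> a * t / 5"
      using True a by simp
    moreover have "0 \<le> t * p"
      using p True by simp
    ultimately show ?thesis
      by linarith
  next
    case False
    have "2 * (q - p) \<le> t * (q + p)"
      using log_mean_bound p pq mu_neg_le_exp_mult[OF s] by (simp add: p_def q_def t_def)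
    then have "a * (2 * (q - p)) \<le> a * (t * (q + p))"
      using a by (intro mult_left_mono) auto
    also have "\<dots> = t * (a * (q + p))"
      by simp
    also have "\<dots> \<le> t * (2 * p + 2 * a / 5)"
      using mu_neg_weighted_sum_le[OF a s] False s
      by (intro mult_left_mono) (auto simp: p_def q_def t_def)
    finally show ?thesis
      by (simp add: algebra_simps)
  qed
  moreover have "swish (- s) - swish (- a) = a * (q - p) - t * p"
    by (simp add: swish_def p_def q_def t_def algebra_simps)
  moreover have "a * t / 5 = a / 5 * (s - a)"
    by (simp add: t_def)
  ultimately show ?thesis
    by linarith
qed

lemma swish_secant_ge_global: "- (u - a)\<^sup>2 / 5 \<le> (swish u - swish a) * (u - a)"
proof (cases "a \<le> u")
  case True
  then have "- (u - a) / 5 * (u - a) \<le> (swish u - swish a) * (u - a)"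
    using swish_diff_ge by (intro mult_right_mono) auto
  moreover have "- (u - a)\<^sup>2 / 5 = - (u - a) / 5 * (u - a)"
    by (simp add: power2_eq_square algebra_simps)
  ultimately show ?thesis
    by linarith
next
  case False
  then have "- (a - u) / 5 * (a - u) \<le> (swish a - swish u) * (a - u)"
    using swish_diff_ge by (intro mult_right_mono) auto
  then show ?thesis
    by (simp add: power2_eq_square algebra_simps)
qed

(* The constant 1/5 matters: with 1/4 in its place sample_constant_le fails (take G = 1, r > |c0|). *)
lemma swish_secant_ge: "- (\<bar>a\<bar> / 5) * (u - a)\<^sup>2 \<le> (swish u - swish a) * (u - a)"
proof -
  have nonneg: "- (\<bar>a\<bar> / 5) * (u - a)\<^sup>2 \<le> 0"
    by simp
  consider "1 \<le> \<bar>a\<bar>" | "\<bar>a\<bar> < 1" "a \<le> u" | "\<bar>a\<bar> < 1" "u < a" "-1 \<le> u \<or> 0 \<le> a"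
    | "\<bar>a\<bar> < 1" "u < -1" "a < 0"
    by linarith
  then show ?thesis
  proof cases
    case 1
    then have "- (\<bar>a\<bar> / 5) * (u - a)\<^sup>2 \<le> - (u - a)\<^sup>2 / 5"
      using mult_right_mono[OF 1 zero_le_power2[of "u - a"]] by simp
    then show ?thesis
      using swish_secant_ge_global by (rule order_trans)
  next
    case 2
    then have "0 \<le> (swish u - swish a) * (u - a)"
      using swish_mono[of a u] by simp
    then show ?thesis
      using nonneg by linarith
  next
    case 3
    then have "swish u \<le> swish a"
      using swish_mono[of u a] swish_nonpos[of u] swish_nonneg[of a] by linarith
    then have "0 \<le> (swish u - swish a) * (u - a)"
      using 3 by (simp add: mult_nonpos_nonpos)
    then show ?thesis
      using nonneg by linarith
  next
    case 4
    then have "swish u - swish a \<le> \<bar>a\<bar> / 5 * (a - u)"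
      using swish_neg_diff_le[of "- a" "- u"] by simp
    then have "(swish u - swish a) * (a - u) \<le> \<bar>a\<bar> / 5 * (a - u) * (a - u)"
      using 4 by (intro mult_right_mono) auto
    moreover have "(swish u - swish a) * (u - a) = - ((swish u - swish a) * (a - u))"
      and "\<bar>a\<bar> / 5 * (u - a)\<^sup>2 = \<bar>a\<bar> / 5 * (a - u) * (a - u)"
      by (simp_all add: power2_eq_square algebra_simps)
    ultimately show ?thesis
      by linarith
  qed
qed

lemma swish_secant_le: "(swish u - swish a) * (u - a) \<le> (1 + \<bar>a\<bar> / 5) * (u - a)\<^sup>2"
proof -
  have "- (\<bar>- a\<bar> / 5) * (- u - - a)\<^sup>2 \<le> (swish (- u) - swish (- a)) * (- u - - a)"
    by (rule swish_secant_ge)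
  then show ?thesis
    by (simp add: swish_minus power2_eq_square algebra_simps)
qed

lemma abs_secant_swish_le:
  assumes y: "y \<in> {0, 1}"
  shows "\<bar>y * (u - a) - (swish u - swish a)\<bar> \<le> (1 + \<bar>a\<bar> / 5) * \<bar>u - a\<bar>"
proof (cases "u = a")
  case False
  define d D K where "d = u - a" and "D = swish u - swish a" and "K = 1 + \<bar>a\<bar> / 5"
  have lower: "- (K - 1) * d\<^sup>2 \<le> D * d" and upper: "D * d \<le> K * d\<^sup>2"
    using swish_secant_ge[of a u] swish_secant_le[of u a] by (simp_all add: d_def D_def K_def)
  have "K * d\<^sup>2 = d\<^sup>2 + (K - 1) * d\<^sup>2" and "0 \<le> (K - 1) * d\<^sup>2"
    by (simp_all add: K_def algebra_simps)
  moreover have "(y * d - D) * d = - (D * d) \<or> (y * d - D) * d = d\<^sup>2 - D * d"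
    using y by (auto simp: power2_eq_square algebra_simps)
  ultimately have "\<bar>(y * d - D) * d\<bar> \<le> K * d\<^sup>2"
    using lower upper zero_le_power2[of d] unfolding abs_le_iff by linarith
  then have "\<bar>y * d - D\<bar> * \<bar>d\<bar> \<le> (K * \<bar>d\<bar>) * \<bar>d\<bar>"
    by (simp add: abs_mult power2_eq_square mult.assoc)
  then show ?thesis
    using False by (simp add: d_def D_def K_def)
qed simp

lemma logistic_score_diff_le:
  assumes y: "y \<in> {0, 1}"
  shows "\<bar>(y - mu (p * q)) * p - (y - mu (p' * q)) * p'\<bar> \<le> (1 + \<bar>p'\<bar> * \<bar>q\<bar> / 5) * \<bar>p - p'\<bar>"
proof (cases "q = 0")
  case True
  have "\<bar>(y - mu (p * q)) * p - (y - mu (p' * q)) * p'\<bar> = \<bar>y - 1 / 2\<bar> * \<bar>p - p'\<bar>"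
    by (simp add: True mu_zero abs_mult flip: right_diff_distrib)
  also have "\<dots> \<le> (1 + \<bar>p'\<bar> * \<bar>q\<bar> / 5) * \<bar>p - p'\<bar>"
    using y by (intro mult_right_mono) auto
  finally show ?thesis .
next
  case False
  have "\<bar>(y - mu (p * q)) * p - (y - mu (p' * q)) * p'\<bar> * \<bar>q\<bar>
          = \<bar>y * (p * q - p' * q) - (swish (p * q) - swish (p' * q))\<bar>"
    by (simp add: swish_def algebra_simps flip: abs_mult)
  also have "\<dots> \<le> (1 + \<bar>p' * q\<bar> / 5) * \<bar>p * q - p' * q\<bar>"
    by (rule abs_secant_swish_le[OF y])
  also have "\<dots> = (1 + \<bar>p'\<bar> * \<bar>q\<bar> / 5) * \<bar>p - p'\<bar> * \<bar>q\<bar>"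
    by (simp add: abs_mult flip: left_diff_distrib)
  finally show ?thesis
    using False by simp
qed

section \<open>Bounding the per-sample terms\<close>

lemma supnorm_ge: "\<bar>v $ i\<bar> \<le> supnorm v"
  unfolding supnorm_def by (rule Max_ge) auto

lemma supnorm_nonneg: "0 \<le> supnorm v"
  using order_trans[OF abs_ge_zero supnorm_ge] .

lemma norm_le_sqrt_card_supnorm: "norm (v :: real ^ 'd) \<le> sqrt (real CARD('d)) * supnorm v"
proof -
  have "norm v = sqrt (\<Sum>i\<in>UNIV. (v $ i)\<^sup>2)"
    unfolding norm_vec_def L2_set_def by simp
  also have "\<dots> \<le> sqrt (\<Sum>i\<in>(UNIV :: 'd set). (supnorm v)\<^sup>2)"
    using power_mono[OF supnorm_ge abs_ge_zero, of v _ 2] by (intro real_sqrt_le_mono sum_mono) simp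
  also have "\<dots> = sqrt (real CARD('d)) * supnorm v"
    using supnorm_nonneg[of v] by (simp add: real_sqrt_mult)
  finally show ?thesis .
qed

lemma norm_le_of_Theta: "\<theta> \<in> Theta tmax \<Longrightarrow> norm (\<theta> :: real ^ 'd) \<le> sqrt (real CARD('d)) * tmax"
  unfolding Theta_def using norm_le_sqrt_card_supnorm[of \<theta>]
  by (auto elim!: order_trans intro: mult_left_mono)

lemma max_one_norm_le_of_Gamma:
  assumes "\<gamma> \<in> Gamma gmax"
  shows "max 1 (norm (\<gamma> :: real ^ 'd)) \<le> sqrt (real CARD('d)) * gmax"
proof -
  have gmax: "1 \<le> gmax" and "supnorm \<gamma> \<le> gmax"
    using assms by (simp_all add: Gamma_def)
  then have "norm \<gamma> \<le> sqrt (real CARD('d)) * gmax"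
    using norm_le_sqrt_card_supnorm[of \<gamma>] by (auto elim!: order_trans intro: mult_left_mono)
  moreover have "1 * 1 \<le> sqrt (real CARD('d)) * gmax"
    using gmax by (intro mult_mono) (auto simp: Suc_le_eq)
  ultimately show ?thesis
    by simp
qed

lemma abs_sigma_le: "\<bar>sigma psi0 psi \<gamma> x\<bar> \<le> \<bar>psi0 x\<bar> + norm \<gamma> * norm (psi x)"
  using Cauchy_Schwarz_ineq2[of \<gamma> "psi x"] by (simp add: sigma_def abs_triangle_ineq order_trans)

lemma sigma_diff: "sigma psi0 psi \<gamma> x - sigma psi0 psi \<gamma>' x = (\<gamma> - \<gamma>') \<bullet> psi x"
  by (simp add: sigma_def inner_diff_left)

lemma norm_diff_le_twice_bound:
  fixes u v :: "'v::real_normed_vector"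
  shows "norm u \<le> B \<Longrightarrow> norm v \<le> B \<Longrightarrow> norm (u - v) \<le> 2 * B"
  using norm_triangle_ineq4[of u v] by linarith

lemma norm_avg_le:
  fixes V :: "nat \<Rightarrow> 'v::real_normed_vector"
  assumes "\<And>i. i < n \<Longrightarrow> norm (V i) \<le> B" and "0 \<le> B"
  shows "norm ((1 / real n) *\<^sub>R (\<Sum>i<n. V i)) \<le> B"
proof (cases "n = 0")
  case False
  have "norm ((1 / real n) *\<^sub>R (\<Sum>i<n. V i)) \<le> (1 / real n) * (\<Sum>i<n. norm (V i))"
    by (simp add: divide_right_mono norm_sum)
  also have "\<dots> \<le> (1 / real n) * (\<Sum>i<n. B)"
    using assms(1) by (intro mult_left_mono sum_mono) auto
  also have "\<dots> = B"
    using False by simp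
  finally show ?thesis .
qed (simp add: assms(2))

lemma norm_logistic_score_diff_le:
  fixes v :: "'v::real_normed_vector"
  assumes "y \<in> {0, 1}" "\<bar>p'\<bar> \<le> P" "\<bar>q\<bar> \<le> Q" "\<bar>p - p'\<bar> \<le> D" "norm v \<le> V"
  shows "norm (((y - mu (p * q)) * p - (y - mu (p' * q)) * p') *\<^sub>R v) \<le> (1 + P * Q / 5) * D * V"
proof -
  have PQ: "0 \<le> P" "0 \<le> Q"
    using assms(2,3) abs_ge_zero order_trans by blast+
  have "\<bar>p'\<bar> * \<bar>q\<bar> \<le> P * Q"
    using assms(2,3) PQ by (intro mult_mono) auto
  then have "(1 + \<bar>p'\<bar> * \<bar>q\<bar> / 5) * \<bar>p - p'\<bar> \<le> (1 + P * Q / 5) * D"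
    using assms(4) PQ by (intro mult_mono) auto
  then have "\<bar>(y - mu (p * q)) * p - (y - mu (p' * q)) * p'\<bar> \<le> (1 + P * Q / 5) * D"
    using logistic_score_diff_le[OF assms(1), of p q p'] by linarith
  then show ?thesis
    using assms(5) by (auto intro: mult_mono)
qed

lemma sample_constant_le:
  fixes phimax psimax c0 r T G S :: real
  assumes phi: "0 \<le> phimax" and psi: "sqrt (c0\<^sup>2 + r\<^sup>2) \<le> psimax"
    and r: "0 \<le> r" and T: "0 \<le> T" and S: "T * max 1 G \<le> S"
  shows "(1 + (\<bar>c0\<bar> + G * r) * (T * (2 * phimax)) / 5) * (2 * phimax * r)
           \<le> phimax * psimax * (2 + S * phimax * psimax)"
proof -
  define M where "M = max 1 G"
  have M: "1 \<le> M" "G \<le> M"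
    by (simp_all add: M_def)
  have "r \<le> psimax"
    using real_sqrt_sum_squares_ge2[of r c0] psi by linarith
  have "r * \<bar>c0\<bar> \<le> c0\<^sup>2 + r\<^sup>2 / 4"
    using zero_le_power2[of "\<bar>c0\<bar> - r / 2"] by (simp add: power2_eq_square algebra_simps)
  moreover have "1 * c0\<^sup>2 \<le> 5 / 4 * M * c0\<^sup>2" and "(G + 1 / 4) * r\<^sup>2 \<le> 5 / 4 * M * r\<^sup>2"
    using M by (intro mult_right_mono; simp)+
  moreover have "5 / 4 * M * (c0\<^sup>2 + r\<^sup>2) \<le> 5 / 4 * M * psimax\<^sup>2"
    using M psi by (intro mult_left_mono) (auto dest: sqrt_le_D)
  ultimately have cross: "r * \<bar>c0\<bar> + G * r\<^sup>2 \<le> 5 / 4 * M * psimax\<^sup>2"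
    by (simp add: distrib_left distrib_right)
  have "(1 + (\<bar>c0\<bar> + G * r) * (T * (2 * phimax)) / 5) * (2 * phimax * r)
          = 2 * phimax * r + 4 / 5 * phimax\<^sup>2 * T * (r * \<bar>c0\<bar> + G * r\<^sup>2)"
    by (simp add: power2_eq_square algebra_simps)
  also have "\<dots> \<le> 2 * phimax * psimax + 4 / 5 * phimax\<^sup>2 * T * (5 / 4 * M * psimax\<^sup>2)"
    using \<open>r \<le> psimax\<close> cross phi T by (intro add_mono mult_left_mono) auto
  also have "\<dots> = 2 * phimax * psimax + phimax\<^sup>2 * psimax\<^sup>2 * (T * M)"
    by (simp add: algebra_simps)
  also have "\<dots> \<le> 2 * phimax * psimax + phimax\<^sup>2 * psimax\<^sup>2 * S"
    using S by (simp add: M_def mult_left_mono)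
  also have "\<dots> = phimax * psimax * (2 + S * phimax * psimax)"
    by (simp add: power2_eq_square algebra_simps)
  finally show ?thesis .
qed

lemma mult_le_add_max:
  fixes P Q p q e :: real
  assumes "0 \<le> P" "P \<le> p + e" "0 \<le> Q" "Q \<le> q" "0 \<le> e"
  shows "P * Q \<le> e * max p q + p * q"
proof -
  have "P * Q \<le> (p + e) * q"
    using assms by (intro mult_mono) auto
  also have "\<dots> \<le> p * q + e * max p q"
    using assms by (simp add: distrib_right mult_left_mono)
  finally show ?thesis
    by simp
qed

section \<open>Lipschitz bounds for the gradients\<close>

lemma lipschitz_const_nonneg:
  fixes phimax psimax S :: real
  assumes "\<forall>st ac. norm (phi st ac :: 'v::real_normed_vector) \<le> phimax"
    and "\<forall>xx. sqrt ((psi0 xx)\<^sup>2 + (norm (psi xx :: 'w::real_normed_vector))\<^sup>2) \<le> psimax"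
    and "0 \<le> S"
  shows "0 \<le> phimax" "0 \<le> psimax" "0 \<le> phimax * psimax * (2 + S * phimax * psimax)"
proof -
  show phimax: "0 \<le> phimax"
    using order_trans[OF norm_ge_zero assms(1)[rule_format]] .
  show psimax: "0 \<le> psimax"
    using order_trans[OF real_sqrt_ge_zero assms(2)[rule_format]] by simp
  show "0 \<le> phimax * psimax * (2 + S * phimax * psimax)"
    using phimax psimax assms(3) by simp
qed

lemma norm_grad_theta_diff_le:
  fixes phi :: "'s \<Rightarrow> 'a \<Rightarrow> real ^ 'd1" and psi :: "'x \<Rightarrow> real ^ 'd2"
  assumes y01: "\<forall>i<n. y i \<in> {0, 1}"
    and phi: "\<forall>st ac. norm (phi st ac) \<le> phimax"
    and psi: "\<forall>xx. sqrt ((psi0 xx)\<^sup>2 + (norm (psi xx))\<^sup>2) \<le> psimax"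
    and S: "norm \<theta> * max 1 (norm \<gamma>') \<le> S"
  shows "norm (grad (\<lambda>t. Ln n x s a0 a1 y phi psi0 psi t \<gamma>) \<theta> - grad (\<lambda>t. Ln n x s a0 a1 y phi psi0 psi t \<gamma>') \<theta>)
           \<le> phimax * psimax * (2 + S * phimax * psimax) * norm (\<gamma> - \<gamma>')"
proof -
  let ?M = "phimax * psimax * (2 + S * phimax * psimax)"
  define z where "z i = phi (s i) (a1 i) - phi (s i) (a0 i)" for i
  define c where "c g i = sigma psi0 psi g (x i)" for g i
  define V where "V i = ((y i - mu (c \<gamma> i * (\<theta> \<bullet> z i))) * c \<gamma> i
                          - (y i - mu (c \<gamma>' i * (\<theta> \<bullet> z i))) * c \<gamma>' i) *\<^sub>R z i" for i
  have "0 \<le> S"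
    using order_trans[OF _ S] by simp
  note nonneg = lipschitz_const_nonneg[OF phi psi this]
  have "norm (V i) \<le> ?M * norm (\<gamma> - \<gamma>')" if "i < n" for i
  proof -
    let ?c0 = "psi0 (x i)" and ?r = "norm (psi (x i))"
    have "norm (V i) \<le> (1 + (\<bar>?c0\<bar> + norm \<gamma>' * ?r) * (norm \<theta> * (2 * phimax)) / 5)
                          * (?r * norm (\<gamma> - \<gamma>')) * (2 * phimax)"
      unfolding V_def
    proof (rule norm_logistic_score_diff_le)
      show "norm (z i) \<le> 2 * phimax"
        using phi by (simp add: z_def norm_diff_le_twice_bound)
      then show "\<bar>\<theta> \<bullet> z i\<bar> \<le> norm \<theta> * (2 * phimax)"
        by (intro order_trans[OF Cauchy_Schwarz_ineq2 mult_left_mono]) simp_all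
      show "\<bar>c \<gamma> i - c \<gamma>' i\<bar> \<le> ?r * norm (\<gamma> - \<gamma>')"
        using Cauchy_Schwarz_ineq2[of "\<gamma> - \<gamma>'" "psi (x i)"] by (simp add: c_def sigma_diff mult.commute)
    qed (use y01 that in \<open>auto simp: c_def abs_sigma_le\<close>)
    also have "\<dots> = (1 + (\<bar>?c0\<bar> + norm \<gamma>' * ?r) * (norm \<theta> * (2 * phimax)) / 5) * (2 * phimax * ?r)
                      * norm (\<gamma> - \<gamma>')"
      by (simp add: mult_ac)
    also have "\<dots> \<le> ?M * norm (\<gamma> - \<gamma>')"
      using sample_constant_le[OF nonneg(1) psi[rule_format] norm_ge_zero norm_ge_zero S]
      by (intro mult_right_mono) auto
    finally show ?thesis .
  qed
  then have "norm ((1 / real n) *\<^sub>R (\<Sum>i<n. V i)) \<le> ?M * norm (\<gamma> - \<gamma>')"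
    using nonneg(3) by (intro norm_avg_le) auto
  then show ?thesis
    by (simp add: grad_Ln_theta V_def z_def c_def scaleR_diff_left sum_subtractf norm_minus_commute
        flip: scaleR_diff_right)
qed

lemma norm_grad_gamma_diff_le:
  fixes phi :: "'s \<Rightarrow> 'a \<Rightarrow> real ^ 'd1" and psi :: "'x \<Rightarrow> real ^ 'd2"
  assumes y01: "\<forall>i<n. y i \<in> {0, 1}"
    and phi: "\<forall>st ac. norm (phi st ac) \<le> phimax"
    and psi: "\<forall>xx. sqrt ((psi0 xx)\<^sup>2 + (norm (psi xx))\<^sup>2) \<le> psimax"
    and S: "norm \<theta>' * max 1 (norm \<gamma>) \<le> S"
  shows "norm (grad (\<lambda>g. Ln n x s a0 a1 y phi psi0 psi \<theta> g) \<gamma> - grad (\<lambda>g. Ln n x s a0 a1 y phi psi0 psi \<theta>' g) \<gamma>)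
           \<le> phimax * psimax * (2 + S * phimax * psimax) * norm (\<theta> - \<theta>')"
proof -
  let ?M = "phimax * psimax * (2 + S * phimax * psimax)"
  define z where "z i = phi (s i) (a1 i) - phi (s i) (a0 i)" for i
  define c where "c i = sigma psi0 psi \<gamma> (x i)" for i
  define V where "V i = ((y i - mu ((\<theta> \<bullet> z i) * c i)) * (\<theta> \<bullet> z i)
                          - (y i - mu ((\<theta>' \<bullet> z i) * c i)) * (\<theta>' \<bullet> z i)) *\<^sub>R psi (x i)" for i
  have "0 \<le> S"
    using order_trans[OF _ S] by simp
  note nonneg = lipschitz_const_nonneg[OF phi psi this]
  have "norm (V i) \<le> ?M * norm (\<theta> - \<theta>')" if "i < n" for i
  proof -
    let ?c0 = "psi0 (x i)" and ?r = "norm (psi (x i))"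
    have z: "norm (z i) \<le> 2 * phimax"
      using phi by (simp add: z_def norm_diff_le_twice_bound)
    have "norm (V i) \<le> (1 + (norm \<theta>' * (2 * phimax)) * (\<bar>?c0\<bar> + norm \<gamma> * ?r) / 5)
                          * (norm (\<theta> - \<theta>') * (2 * phimax)) * ?r"
      unfolding V_def
    proof (rule norm_logistic_score_diff_le)
      show "\<bar>\<theta>' \<bullet> z i\<bar> \<le> norm \<theta>' * (2 * phimax)"
        using z by (intro order_trans[OF Cauchy_Schwarz_ineq2 mult_left_mono]) simp_all
      show "\<bar>\<theta> \<bullet> z i - \<theta>' \<bullet> z i\<bar> \<le> norm (\<theta> - \<theta>') * (2 * phimax)"
        using z by (simp only: flip: inner_diff_left)
          (intro order_trans[OF Cauchy_Schwarz_ineq2 mult_left_mono], simp_all)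
    qed (use y01 that in \<open>auto simp: c_def abs_sigma_le\<close>)
    also have "\<dots> = (1 + (\<bar>?c0\<bar> + norm \<gamma> * ?r) * (norm \<theta>' * (2 * phimax)) / 5) * (2 * phimax * ?r)
                      * norm (\<theta> - \<theta>')"
      by (simp add: mult_ac)
    also have "\<dots> \<le> ?M * norm (\<theta> - \<theta>')"
      using sample_constant_le[OF nonneg(1) psi[rule_format] norm_ge_zero norm_ge_zero S]
      by (intro mult_right_mono) auto
    finally show ?thesis .
  qed
  then have "norm ((1 / real n) *\<^sub>R (\<Sum>i<n. V i)) \<le> ?M * norm (\<theta> - \<theta>')"
    using nonneg(3) by (intro norm_avg_le) auto
  then show ?thesis
    by (simp add: grad_Ln_gamma V_def z_def c_def scaleR_diff_left sum_subtractf norm_minus_commute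
        mult.commute flip: scaleR_diff_right)
qed

theorem lemmaS5:
  fixes n :: nat
    and x :: "nat \<Rightarrow> 'x" and s :: "nat \<Rightarrow> 's" and a0 a1 :: "nat \<Rightarrow> 'a"
    and y :: "nat \<Rightarrow> real"
    and phi :: "'s \<Rightarrow> 'a \<Rightarrow> real ^ 'd1"
    and psi0 :: "'x \<Rightarrow> real" and psi :: "'x \<Rightarrow> real ^ 'd2"
    and phimax psimax thetamax gammamax b :: real
    and theta_s :: "real ^ 'd1" and gamma_s :: "real ^ 'd2"
  assumes b: "b \<ge> 0"
    and y01: "\<forall>i<n. y i \<in> {0, 1}"
    and A1_phi: "\<forall>st ac. norm (phi st ac) \<le> phimax"
    and A1_theta: "theta_s \<in> Theta thetamax"
    and A2_psi0: "\<exists>xx. psi0 xx \<noteq> 0"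
    and A2_psi: "\<forall>xx. sqrt ((psi0 xx)\<^sup>2 + (norm (psi xx))\<^sup>2) \<le> psimax"
    and A2_gamma: "gamma_s \<in> Gamma gammamax"
  shows "let L = Ln n x s a0 a1 y phi psi0 psi;
             d1 = real CARD('d1); d2 = real CARD('d2);
             Mt = phimax * psimax * (2 + (b * max (sqrt d1 * thetamax) (sqrt d2 * gammamax) / sqrt 2
                    + sqrt (d1 * d2) * gammamax * thetamax) * phimax * psimax)
         in (\<forall>\<theta> \<gamma> \<gamma>'. norm (\<theta> - theta_s) \<le> b / sqrt 2 \<and> \<gamma>' \<in> Gamma gammamax \<longrightarrow>
               norm (grad (\<lambda>t. L t \<gamma>) \<theta> - grad (\<lambda>t. L t \<gamma>') \<theta>) \<le> Mt * norm (\<gamma> - \<gamma>'))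
          \<and> (\<forall>\<gamma> \<theta> \<theta>'. norm (\<gamma> - gamma_s) \<le> b / sqrt 2 \<and> \<theta>' \<in> Theta thetamax \<longrightarrow>
               norm (grad (\<lambda>g. L \<theta> g) \<gamma> - grad (\<lambda>g. L \<theta>' g) \<gamma>) \<le> Mt * norm (\<theta> - \<theta>'))"
proof -
  define p q e where "p = sqrt (real CARD('d1)) * thetamax" and "q = sqrt (real CARD('d2)) * gammamax"
    and "e = b / sqrt 2"
  have S: "b * max (sqrt (real CARD('d1)) * thetamax) (sqrt (real CARD('d2)) * gammamax) / sqrt 2
             + sqrt (real CARD('d1) * real CARD('d2)) * gammamax * thetamax = e * max p q + p * q"
    by (simp add: p_def q_def e_def real_sqrt_mult mult_ac)
  have "0 \<le> e"
    using b by (simp add: e_def)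
  have theta_s: "norm theta_s \<le> p" and gamma_s: "max 1 (norm gamma_s) \<le> q"
    using norm_le_of_Theta[OF A1_theta] max_one_norm_le_of_Gamma[OF A2_gamma] by (simp_all add: p_def q_def)
  have "norm \<theta> * max 1 (norm \<gamma>') \<le> e * max p q + p * q"
    if "norm (\<theta> - theta_s) \<le> e" "\<gamma>' \<in> Gamma gammamax" for \<theta> :: "real ^ 'd1" and \<gamma>' :: "real ^ 'd2"
    using norm_triangle_sub[of \<theta> theta_s] theta_s that max_one_norm_le_of_Gamma[OF that(2)] \<open>0 \<le> e\<close>
    by (intro mult_le_add_max) (auto simp: q_def)
  moreover have "norm \<theta>' * max 1 (norm \<gamma>) \<le> e * max p q + p * q"
    if "norm (\<gamma> - gamma_s) \<le> e" "\<theta>' \<in> Theta thetamax" for \<gamma> :: "real ^ 'd2" and \<theta>' :: "real ^ 'd1"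
    using mult_le_add_max[of "max 1 (norm \<gamma>)" q e "norm \<theta>'" p] norm_triangle_sub[of \<gamma> gamma_s]
      gamma_s that norm_le_of_Theta[OF that(2)] \<open>0 \<le> e\<close>
    by (auto simp: p_def max.commute mult.commute)
  ultimately show ?thesis
    unfolding Let_def S e_def[symmetric]
    using norm_grad_theta_diff_le[OF y01 A1_phi A2_psi] norm_grad_gamma_diff_le[OF y01 A1_phi A2_psi]
    by blast
qed

end
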